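(* Let $ABC$ be a triangle with incenter $I$ and Bevan point $B_e$. Let $A', B', C'$ be the feet of the perpendiculars from $B_e$ to $AI, BI, CI$ respectively. Then the orthocenter of triangle $A'B'C'$ coincides with the Nagel point of $ABC$.
   Context: The Bevan point $B_e$ of $ABC$ is the circumcenter of the excentral triangle $I_AI_BI_C$ (the triangle formed by the three excenters of $ABC$). The Nagel point of $ABC$ is the common point of the lines joining each vertex to the point where the corresponding excircle touches the opposite side. *)

theory Defs
  imports "HOL-Analysis.Analysis"
begin

type_synonym point = "real^2"

definition incenter :: "point \<Rightarrow> point \<Rightarrow> point \<Rightarrow> point" where
  "incenter A B C =
     (let a = dist B C; b = dist C A; c = dist A B
      in (1 / (a + b + c)) *\<^sub>R (a *\<^sub>R A + b *\<^sub>R B + c *\<^sub>R C))"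

text \<open>Excenter opposite to vertex A (centre of the excircle tangent to side BC).\<close>
definition excenter :: "point \<Rightarrow> point \<Rightarrow> point \<Rightarrow> point" where
  "excenter A B C =
     (let a = dist B C; b = dist C A; c = dist A B
      in (1 / (- a + b + c)) *\<^sub>R ((- a) *\<^sub>R A + b *\<^sub>R B + c *\<^sub>R C))"

definition circumcenter :: "point \<Rightarrow> point \<Rightarrow> point \<Rightarrow> point" where
  "circumcenter P Q R = (THE X. dist X P = dist X Q \<and> dist X Q = dist X R)"

definition bevan_point :: "point \<Rightarrow> point \<Rightarrow> point \<Rightarrow> point" where
  "bevan_point A B C = circumcenter (excenter A B C) (excenter B C A) (excenter C A B)"

definition foot :: "point \<Rightarrow> point \<Rightarrow> point \<Rightarrow> point" where
  "foot P U V = U + (((P - U) \<bullet> (V - U)) / ((V - U) \<bullet> (V - U))) *\<^sub>R (V - U)"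

text \<open>Nagel point: the common point of the lines joining each vertex to the point
  where the corresponding excircle touches the opposite side (the touch point being
  the foot of the perpendicular from the excenter onto that side).\<close>
definition nagel_point :: "point \<Rightarrow> point \<Rightarrow> point \<Rightarrow> point" where
  "nagel_point A B C =
     (THE N. collinear {A, foot (excenter A B C) B C, N}
           \<and> collinear {B, foot (excenter B C A) C A, N}
           \<and> collinear {C, foot (excenter C A B) A B, N})"

definition is_orthocenter :: "point \<Rightarrow> point \<Rightarrow> point \<Rightarrow> point \<Rightarrow> bool" where
  "is_orthocenter P Q R H \<longleftrightarrow>
     (H - P) \<bullet> (R - Q) = 0 \<and> (H - Q) \<bullet> (P - R) = 0 \<and> (H - R) \<bullet> (Q - P) = 0"

end

theory Submission
  imports Defs
begin

(* The incenter I is the orthocenter of the excentral triangle I_A I_B I_C: the internal and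
   external bisectors at A are perpendicular, and A lies on I_B I_C.  By Euler's relation
   O = (P + Q + R - H)/2, the Bevan point is Be = (I_A + I_B + I_C - I)/2.  Hence
   Be - (A + (I_A - I)/2) = ((I_B - A) + (I_C - A))/2 is perpendicular to AI, while
   A + (I_A - I)/2 lies on AI, so this point is the foot A'.  The Nagel point is
   ((s-a) A + (s-b) B + (s-c) C)/s, the only common point of two of its cevians.  In affine
   coordinates over A, B, C, with inner products given by the law of cosines, the orthogonality
   of N - A' and C' - B' becomes a rational identity in a, b, c; the two other altitude
   conditions follow by relabelling the triangle cyclically. *)

lemma dist_eq_iff_inner_midpoint:
  fixes X P Q :: "'a::real_inner"
  shows "dist X P = dist X Q \<longleftrightarrow> (X - midpoint P Q) \<bullet> (Q - P) = 0"
proof -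
  have mid: "(X - midpoint P Q) \<bullet> (Q - P) = ((X - P) \<bullet> (X - P) - (X - Q) \<bullet> (X - Q)) / 2"
    by (simp add: midpoint_def inner_commute algebra_simps)
  have "dist X P = dist X Q \<longleftrightarrow> (X - P) \<bullet> (X - P) = (X - Q) \<bullet> (X - Q)"
    by (simp add: dist_norm norm_eq_sqrt_inner)
  then show ?thesis
    unfolding mid by simp
qed

lemma equidistant_from_orthocenter:
  assumes "is_orthocenter P Q R H"
  shows "dist ((1/2) *\<^sub>R (P + Q + R - H)) P = dist ((1/2) *\<^sub>R (P + Q + R - H)) Q"
    and "dist ((1/2) *\<^sub>R (P + Q + R - H)) Q = dist ((1/2) *\<^sub>R (P + Q + R - H)) R"
proof -
  have "(1/2) *\<^sub>R (P + Q + R - H) - midpoint P Q = (1/2) *\<^sub>R (R - H)"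
    "(1/2) *\<^sub>R (P + Q + R - H) - midpoint Q R = (1/2) *\<^sub>R (P - H)"
    by (simp_all add: midpoint_def algebra_simps)
  moreover have "(R - H) \<bullet> (Q - P) = 0" "(P - H) \<bullet> (R - Q) = 0"
    using assms unfolding is_orthocenter_def
    by (simp_all add: algebra_simps)
  ultimately show "dist ((1/2) *\<^sub>R (P + Q + R - H)) P = dist ((1/2) *\<^sub>R (P + Q + R - H)) Q"
    and "dist ((1/2) *\<^sub>R (P + Q + R - H)) Q = dist ((1/2) *\<^sub>R (P + Q + R - H)) R"
    by (simp_all add: dist_eq_iff_inner_midpoint)
qed

lemma orthogonal_in_plane_multiple:
  fixes w d :: "real^2"
  assumes "w \<noteq> 0" "w \<bullet> d = 0"
  shows "\<exists>k. d = k *\<^sub>R vector [- w$2, w$1]"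
proof -
  have wd: "w$1 * d$1 + w$2 * d$2 = 0"
    using assms(2) by (simp add: inner_vec_def sum_2)
  have n: "(w$1)\<^sup>2 + (w$2)\<^sup>2 \<noteq> 0"
    using assms(1) by (auto simp: vec_eq_iff forall_2)
  have "d$1 * ((w$1)\<^sup>2 + (w$2)\<^sup>2) = - (w$1 * d$2 - w$2 * d$1) * w$2"
    "d$2 * ((w$1)\<^sup>2 + (w$2)\<^sup>2) = (w$1 * d$2 - w$2 * d$1) * w$1"
    using wd by algebra+
  then have "d = ((w$1 * d$2 - w$2 * d$1) / ((w$1)\<^sup>2 + (w$2)\<^sup>2)) *\<^sub>R vector [- w$2, w$1]"
    using n by (simp add: vec_eq_iff forall_2 field_simps)
  then show ?thesis ..
qed

lemma orthogonal_to_noncollinear_eq_0: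
  fixes w P Q R :: "real^2"
  assumes "\<not> collinear {P, Q, R}" "w \<bullet> (Q - P) = 0" "w \<bullet> (R - P) = 0"
  shows "w = 0"
proof (rule ccontr)
  assume "w \<noteq> 0"
  define r where "r = (vector [- w$2, w$1] :: real^2)"
  have multiple: "\<exists>k. X - P = k *\<^sub>R r" if "X \<in> {P, Q, R}" for X
    using that orthogonal_in_plane_multiple[OF \<open>w \<noteq> 0\<close>] assms(2,3)
    unfolding r_def by (metis diff_self empty_iff insertE scale_zero_left)
  have "collinear {P, Q, R}"
    unfolding collinear_def
  proof (intro exI[where x = r] ballI)
    fix X Y assume "X \<in> {P, Q, R}" "Y \<in> {P, Q, R}"
    then obtain kX kY where "X - P = kX *\<^sub>R r" "Y - P = kY *\<^sub>R r"
      using multiple by blast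
    then have "X - Y = (kX - kY) *\<^sub>R r"
      by (simp add: algebra_simps)
    then show "\<exists>k. X - Y = k *\<^sub>R r" ..
  qed
  with assms(1) show False ..
qed

lemma circumcenter_eqI:
  assumes "\<not> collinear {P, Q, R}" "dist X P = dist X Q" "dist X Q = dist X R"
  shows "circumcenter P Q R = X"
  unfolding circumcenter_def
proof (rule the_equality)
  show "dist X P = dist X Q \<and> dist X Q = dist X R"
    using assms(2,3) ..
next
  fix Y assume Y: "dist Y P = dist Y Q \<and> dist Y Q = dist Y R"
  have "(Y - X) \<bullet> (Q - P) = (Y - midpoint P Q) \<bullet> (Q - P) - (X - midpoint P Q) \<bullet> (Q - P)"
    "(Y - X) \<bullet> (R - Q) = (Y - midpoint Q R) \<bullet> (R - Q) - (X - midpoint Q R) \<bullet> (R - Q)"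
    by (simp_all add: inner_diff_left)
  moreover have "(Y - midpoint P Q) \<bullet> (Q - P) = 0" "(Y - midpoint Q R) \<bullet> (R - Q) = 0"
    "(X - midpoint P Q) \<bullet> (Q - P) = 0" "(X - midpoint Q R) \<bullet> (R - Q) = 0"
    using Y assms(2,3) dist_eq_iff_inner_midpoint by blast+
  ultimately have "(Y - X) \<bullet> (Q - P) = 0" "(Y - X) \<bullet> (R - Q) = 0"
    by simp_all
  moreover have "R - P = (R - Q) + (Q - P)"
    by simp
  ultimately have "(Y - X) \<bullet> (R - P) = 0"
    by (metis add.right_neutral inner_add_right)
  with \<open>(Y - X) \<bullet> (Q - P) = 0\<close> have "Y - X = 0"
    using orthogonal_to_noncollinear_eq_0[OF assms(1)] by blast
  then show "Y = X"
    by simp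
qed

lemma circumcenter_from_orthocenter:
  assumes "\<not> collinear {P, Q, R}" "is_orthocenter P Q R H"
  shows "circumcenter P Q R = (1/2) *\<^sub>R (P + Q + R - H)"
  using circumcenter_eqI[OF assms(1)] equidistant_from_orthocenter[OF assms(2)] by blast

lemma foot_eqI:
  assumes "U \<noteq> V" "X = U + t *\<^sub>R (V - U)" "(P - X) \<bullet> (V - U) = 0"
  shows "foot P U V = X"
proof -
  have "(P - U) \<bullet> (V - U) = t * ((V - U) \<bullet> (V - U))"
    using assms(2,3) by (simp add: inner_diff_left inner_add_left)
  moreover have "(V - U) \<bullet> (V - U) \<noteq> 0"
    using assms(1) by simp
  ultimately show ?thesis
    unfolding foot_def assms(2) by simp
qed

lemma lines_meet_once:
  fixes A P B Q M N :: "'a::real_vector"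
  assumes "A \<noteq> P" "B \<noteq> Q" "\<not> collinear {A, P, B}"
    and "collinear {A, P, M}" "collinear {A, P, N}" "collinear {B, Q, M}" "collinear {B, Q, N}"
  shows "M = N"
proof (rule ccontr)
  assume "M \<noteq> N"
  have AP: "collinear {A, P, M, N}" and BQ: "collinear {B, Q, M, N}"
    using assms by (simp_all add: collinear_4_3)
  have "collinear {M, N, A}" "collinear {M, N, P}" "collinear {M, N, B}"
    by (rule collinear_subset[OF AP], blast)+ (rule collinear_subset[OF BQ], blast)
  then have "collinear {M, N, x}" if "x \<in> {A, P, B}" for x
    using that by blast
  then have "collinear {M, N, A, P, B}"
    using collinear_triples[OF \<open>M \<noteq> N\<close>] by blast
  then have "collinear {A, P, B}"
    by (rule collinear_subset) auto
  with assms(3) show False ..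
qed

lemma circumcenter_rotate: "circumcenter Q R P = circumcenter P Q R"
  unfolding circumcenter_def by (metis)

locale triangle =
  fixes A B C :: point
  assumes noncollinear: "\<not> collinear {A, B, C}"
begin

abbreviation a :: real where "a \<equiv> dist B C"
abbreviation b :: real where "b \<equiv> dist C A"
abbreviation c :: real where "c \<equiv> dist A B"

lemma rotate: "triangle B C A"
  using noncollinear by unfold_locales (simp add: insert_commute)

lemma centers_rotate:
  "incenter B C A = incenter A B C" "incenter C A B = incenter A B C"
  "bevan_point B C A = bevan_point A B C" "bevan_point C A B = bevan_point A B C"
  "nagel_point B C A = nagel_point A B C" "nagel_point C A B = nagel_point A B C"
  by (simp_all add: incenter_def Let_def dist_commute ac_simps)
    (simp_all only: bevan_point_def nagel_point_def circumcenter_rotate conj_ac)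

lemma side_lt_sum: "a < b + c"
proof -
  have "a \<le> b + c"
    using dist_triangle[of B C A] by (simp add: dist_commute)
  moreover have "a \<noteq> b + c"
  proof
    assume "a = b + c"
    then have "between (B, C) A"
      by (simp add: between dist_commute)
    then have "collinear {B, A, C}"
      by (rule between_imp_collinear)
    with noncollinear show False
      by (simp add: insert_commute)
  qed
  ultimately show ?thesis
    by simp
qed

lemma sides_lt_sum: "a < b + c" "b < c + a" "c < a + b"
  using side_lt_sum triangle.side_lt_sum[OF rotate]
    triangle.side_lt_sum[OF triangle.rotate[OF rotate]]
  by simp_all

lemma sides_pos: "0 < a" "0 < b" "0 < c"
  using sides_lt_sum by linarith+

lemma perimeter_pos: "0 < a + b + c"
  using sides_pos by linarith

lemma tangent_lengths_pos: "0 < b + c - a" "0 < c + a - b" "0 < a + b - c"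
  using sides_lt_sum by linarith+

lemma vertex_not_on_opposite_line: "A \<notin> affine hull {B, C}"
  using noncollinear affine_hull_3_imp_collinear by (metis insert_commute)

lemma cevian_noncollinear:
  assumes "T \<in> affine hull {B, C}" "T \<noteq> B"
  shows "\<not> collinear {A, T, B}"
proof
  assume "collinear {A, T, B}"
  moreover have "collinear {B, C, T}"
    using assms(1) by (rule affine_hull_3_imp_collinear)
  ultimately have "collinear {A, B, C}"
    using collinear_3_trans[of A B T C] assms(2) by (simp add: insert_commute)
  with noncollinear show False ..
qed

definition frame_point :: "real \<Rightarrow> real \<Rightarrow> point" where
  "frame_point p q = A + p *\<^sub>R (B - A) + q *\<^sub>R (C - A)"

definition frame_inner :: "real \<Rightarrow> real \<Rightarrow> real \<Rightarrow> real \<Rightarrow> real" where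
  "frame_inner p q r t = p * r * c\<^sup>2 + (p * t + q * r) * ((b\<^sup>2 + c\<^sup>2 - a\<^sup>2) / 2) + q * t * b\<^sup>2"

lemma frame_point_vertices: "frame_point 0 0 = A" "frame_point 1 0 = B" "frame_point 0 1 = C"
  by (simp_all add: frame_point_def)

lemma frame_point_diff:
  "frame_point p q - frame_point p' q' = (p - p') *\<^sub>R (B - A) + (q - q') *\<^sub>R (C - A)"
  by (simp add: frame_point_def algebra_simps)

lemma frame_point_affine:
  "frame_point p q + t *\<^sub>R (frame_point p' q' - frame_point p q)
     = frame_point (p + t * (p' - p)) (q + t * (q' - q))"
  by (simp add: frame_point_def algebra_simps)

lemma frame_point_barycentric:
  assumes "\<alpha> + \<beta> + \<gamma> = d" "d \<noteq> 0"
  shows "(1 / d) *\<^sub>R (\<alpha> *\<^sub>R A + \<beta> *\<^sub>R B + \<gamma> *\<^sub>R C) = frame_point (\<beta> / d) (\<gamma> / d)"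
proof -
  have "\<alpha> *\<^sub>R A + \<beta> *\<^sub>R B + \<gamma> *\<^sub>R C = d *\<^sub>R A + \<beta> *\<^sub>R (B - A) + \<gamma> *\<^sub>R (C - A)"
    using assms(1) by (auto simp: algebra_simps)
  with assms(2) show ?thesis
    by (simp add: frame_point_def scaleR_add_right)
qed

lemma frame_point_eq_iff: "frame_point p q = frame_point p' q' \<longleftrightarrow> p = p' \<and> q = q'"
proof
  assume "frame_point p q = frame_point p' q'"
  then have zero: "(p - p') *\<^sub>R (B - A) + (q - q') *\<^sub>R (C - A) = 0"
    using frame_point_diff[of p q p' q'] by simp
  have "q = q'"
  proof (rule ccontr)
    assume "q \<noteq> q'"
    have "(q - q') *\<^sub>R (C - A) = - ((p - p') *\<^sub>R (B - A))"
      using zero by (simp add: eq_neg_iff_add_eq_0 add.commute)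
    then have "(q - q') *\<^sub>R (C - A) = (p' - p) *\<^sub>R (B - A)"
      by (simp flip: scaleR_minus_left)
    moreover have "C - A = (1 / (q - q')) *\<^sub>R ((q - q') *\<^sub>R (C - A))"
      using \<open>q \<noteq> q'\<close> by simp
    ultimately have "C - A = ((p' - p) / (q - q')) *\<^sub>R (B - A)"
      by simp
    then have "C = A + ((p' - p) / (q - q')) *\<^sub>R (B - A)"
      by (metis add.commute diff_add_cancel)
    then have "C \<in> affine hull {A, B}"
      unfolding affine_hull_2_alt by blast
    with noncollinear show False
      using affine_hull_3_imp_collinear by blast
  qed
  moreover have "A \<noteq> B"
    using noncollinear by auto
  ultimately show "p = p' \<and> q = q'"
    using zero by simp
qed simp

lemma law_of_cosines: "(B - A) \<bullet> (C - A) = (b\<^sup>2 + c\<^sup>2 - a\<^sup>2) / 2"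
proof -
  have "a\<^sup>2 = ((C - A) - (B - A)) \<bullet> ((C - A) - (B - A))"
    "b\<^sup>2 = (C - A) \<bullet> (C - A)" "c\<^sup>2 = (B - A) \<bullet> (B - A)"
    by (simp_all add: dist_norm power2_norm_eq_inner[symmetric] norm_minus_commute)
  then show ?thesis
    by (simp add: inner_diff_left inner_diff_right inner_commute)
qed

lemma inner_frame_point:
  "(frame_point p q - frame_point p' q') \<bullet> (frame_point r t - frame_point r' t')
     = frame_inner (p - p') (q - q') (r - r') (t - t')"
proof -
  define u v where "u = B - A" and "v = C - A"
  have bilinear: "(\<alpha> *\<^sub>R u + \<beta> *\<^sub>R v) \<bullet> (\<gamma> *\<^sub>R u + \<delta> *\<^sub>R v)
      = \<alpha> * \<gamma> * (u \<bullet> u) + (\<alpha> * \<delta> + \<beta> * \<gamma>) * (u \<bullet> v) + \<beta> * \<delta> * (v \<bullet> v)" for \<alpha> \<beta> \<gamma> \<delta>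
    by (simp add: inner_commute[of v u] algebra_simps)
  have gram: "u \<bullet> u = c\<^sup>2" "v \<bullet> v = b\<^sup>2" "u \<bullet> v = (b\<^sup>2 + c\<^sup>2 - a\<^sup>2) / 2"
    unfolding u_def v_def law_of_cosines[symmetric]
    by (simp_all add: dist_norm power2_norm_eq_inner[symmetric] norm_minus_commute)
  show ?thesis
    unfolding frame_point_diff frame_inner_def u_def[symmetric] v_def[symmetric] bilinear gram ..
qed

lemma inner_frame_point_vertex:
  "(frame_point p q - A) \<bullet> (frame_point r t - A) = frame_inner p q r t"
  using inner_frame_point[of p q 0 0 r t 0 0] by (simp add: frame_point_vertices)

lemma incenter_frame: "incenter A B C = frame_point (b / (a + b + c)) (c / (a + b + c))"
  unfolding incenter_def Let_def using perimeter_pos by (intro frame_point_barycentric) auto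

lemma excenter_frame: "excenter A B C = frame_point (b / (b + c - a)) (c / (b + c - a))"
proof -
  have "excenter A B C = (1 / (b + c - a)) *\<^sub>R ((- a) *\<^sub>R A + b *\<^sub>R B + c *\<^sub>R C)"
    unfolding excenter_def Let_def by (simp add: algebra_simps)
  also have "\<dots> = frame_point (b / (b + c - a)) (c / (b + c - a))"
    using sides_lt_sum by (intro frame_point_barycentric) auto
  finally show ?thesis .
qed

lemma excenter_opposite_B_frame:
  "excenter B C A = frame_point (- b / (c + a - b)) (c / (c + a - b))"
proof -
  have "excenter B C A = (1 / (c + a - b)) *\<^sub>R (a *\<^sub>R A + (- b) *\<^sub>R B + c *\<^sub>R C)"
    unfolding excenter_def Let_def by (simp add: algebra_simps)
  also have "\<dots> = frame_point (- b / (c + a - b)) (c / (c + a - b))"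
    using sides_lt_sum by (intro frame_point_barycentric) auto
  finally show ?thesis .
qed

lemma excenter_opposite_C_frame:
  "excenter C A B = frame_point (b / (a + b - c)) (- c / (a + b - c))"
proof -
  have "excenter C A B = (1 / (a + b - c)) *\<^sub>R (a *\<^sub>R A + b *\<^sub>R B + (- c) *\<^sub>R C)"
    unfolding excenter_def Let_def by (simp add: algebra_simps)
  also have "\<dots> = frame_point (b / (a + b - c)) (- c / (a + b - c))"
    using sides_lt_sum by (intro frame_point_barycentric) auto
  finally show ?thesis .
qed

lemma excenter_incenter_parallel:
  "excenter A B C - incenter A B C = (2 * a / (b + c - a)) *\<^sub>R (incenter A B C - A)"
proof -
  have "b / (b + c - a) - b / (a + b + c) = 2 * a / (b + c - a) * (b / (a + b + c))"
    "c / (b + c - a) - c / (a + b + c) = 2 * a / (b + c - a) * (c / (a + b + c))"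
    using sides_lt_sum by (simp_all add: field_simps)
  moreover have "frame_point p q - A = p *\<^sub>R (B - A) + q *\<^sub>R (C - A)" for p q
    by (simp add: frame_point_def)
  ultimately show ?thesis
    by (simp add: incenter_frame excenter_frame frame_point_diff scaleR_add_right)
qed

(* I - A and I_B - A are multiples of b (B - A) + c (C - A) and c (C - A) - b (B - A), the
   diagonals of a rhombus with side b c. *)
lemma incenter_excenters_orthogonal:
  "(incenter A B C - A) \<bullet> (excenter B C A - A) = 0"
  "(incenter A B C - A) \<bullet> (excenter C A B - A) = 0"
  unfolding incenter_frame excenter_opposite_B_frame excenter_opposite_C_frame
    inner_frame_point_vertex
  by (simp_all add: frame_inner_def power2_eq_square algebra_simps)

lemma incenter_on_excentral_altitude:
  "(incenter A B C - excenter A B C) \<bullet> (excenter C A B - excenter B C A) = 0"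
proof -
  have parallel:
    "incenter A B C - excenter A B C = - (2 * a / (b + c - a)) *\<^sub>R (incenter A B C - A)"
    using excenter_incenter_parallel by (metis minus_diff_eq scaleR_minus_left)
  have side: "excenter C A B - excenter B C A = (excenter C A B - A) - (excenter B C A - A)"
    by simp
  show ?thesis
    unfolding parallel side inner_scaleR_left
      inner_diff_right[of "incenter A B C - A" "excenter C A B - A" "excenter B C A - A"]
    by (simp add: incenter_excenters_orthogonal)
qed

lemma vertex_on_excentral_side: "A \<in> affine hull {excenter B C A, excenter C A B}"
proof -
  define t where "t = (a + b - c) / (2 * a)"
  have "excenter B C A + t *\<^sub>R (excenter C A B - excenter B C A) = frame_point 0 0"
    unfolding excenter_opposite_B_frame excenter_opposite_C_frame frame_point_affine
      frame_point_eq_iff t_def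
    using sides_pos(1) tangent_lengths_pos[THEN dual_order.strict_implies_not_eq]
    by (simp add: divide_simps) (simp add: algebra_simps)
  then show ?thesis
    unfolding affine_hull_2_alt frame_point_vertices by (metis rangeI)
qed

lemma excentral_noncollinear: "\<not> collinear {excenter A B C, excenter B C A, excenter C A B}"
proof
  interpret B: triangle B C A
    by (rule rotate)
  interpret C: triangle C A B
    by (rule B.rotate)
  let ?E = "{excenter A B C, excenter B C A, excenter C A B}"
  assume "collinear ?E"
  have "affine hull {excenter B C A, excenter C A B} \<subseteq> affine hull ?E"
    "affine hull {excenter C A B, excenter A B C} \<subseteq> affine hull ?E"
    "affine hull {excenter A B C, excenter B C A} \<subseteq> affine hull ?E"
    by (rule hull_mono, blast)+
  then have "{A, B, C} \<subseteq> affine hull ?E"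
    using vertex_on_excentral_side B.vertex_on_excentral_side C.vertex_on_excentral_side by blast
  moreover have "collinear (affine hull ?E)"
    using \<open>collinear ?E\<close> by (simp add: collinear_affine_hull_collinear)
  ultimately have "collinear {A, B, C}"
    by (rule collinear_subset[rotated])
  with noncollinear show False ..
qed

lemma is_orthocenter_excentral_incenter:
  "is_orthocenter (excenter A B C) (excenter B C A) (excenter C A B) (incenter A B C)"
proof -
  interpret B: triangle B C A
    by (rule rotate)
  interpret C: triangle C A B
    by (rule B.rotate)
  show ?thesis
    using incenter_on_excentral_altitude B.incenter_on_excentral_altitude
      C.incenter_on_excentral_altitude
    unfolding is_orthocenter_def centers_rotate by simp
qed

lemma bevan_point_eq:
  "bevan_point A B C
     = (1/2) *\<^sub>R (excenter A B C + excenter B C A + excenter C A B - incenter A B C)"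
  unfolding bevan_point_def
  using excentral_noncollinear is_orthocenter_excentral_incenter
  by (rule circumcenter_from_orthocenter)

lemma foot_bevan_point:
  "foot (bevan_point A B C) A (incenter A B C) = A + (a / (b + c - a)) *\<^sub>R (incenter A B C - A)"
proof (rule foot_eqI[where t = "a / (b + c - a)"])
  have "0 < b / (a + b + c)"
    using sides_pos by (intro divide_pos_pos) linarith+
  then have "frame_point 0 0 \<noteq> frame_point (b / (a + b + c)) (c / (a + b + c))"
    by (metis frame_point_eq_iff order_less_irrefl)
  then show "A \<noteq> incenter A B C"
    by (simp add: incenter_frame frame_point_vertices)
  have half_excenter: "A + (a / (b + c - a)) *\<^sub>R (incenter A B C - A)
      = A + (1/2) *\<^sub>R (excenter A B C - incenter A B C)"
    using tangent_lengths_pos by (simp add: excenter_incenter_parallel)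
  have bevan: "bevan_point A B C - (A + (1/2) *\<^sub>R (excenter A B C - incenter A B C))
      = (1/2) *\<^sub>R ((excenter B C A - A) + (excenter C A B - A))"
    unfolding bevan_point_eq by (simp add: scaleR_add_right scaleR_diff_right flip: scaleR_2)
  show "(bevan_point A B C - (A + (a / (b + c - a)) *\<^sub>R (incenter A B C - A)))
      \<bullet> (incenter A B C - A) = 0"
    unfolding half_excenter bevan inner_scaleR_left inner_add_left
    using incenter_excenters_orthogonal
    by (simp add: inner_commute[of "excenter B C A - A"] inner_commute[of "excenter C A B - A"])
qed simp

lemma foot_excenter: "foot (excenter A B C) B C = B + ((a + b - c) / (2 * a)) *\<^sub>R (C - B)"
proof (rule foot_eqI[where t = "(a + b - c) / (2 * a)"])
  show "B \<noteq> C"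
    using sides_pos by auto
  have touch: "B + ((a + b - c) / (2 * a)) *\<^sub>R (C - B)
      = frame_point (1 - (a + b - c) / (2 * a)) ((a + b - c) / (2 * a))"
    using frame_point_affine[of 1 0 "(a + b - c) / (2 * a)" 0 1] by (simp add: frame_point_vertices)
  have side: "C - B = frame_point 0 1 - frame_point 1 0"
    by (simp add: frame_point_vertices)
  show "(excenter A B C - (B + ((a + b - c) / (2 * a)) *\<^sub>R (C - B))) \<bullet> (C - B) = 0"
    unfolding touch unfolding side excenter_frame inner_frame_point
    using sides_pos(1) tangent_lengths_pos[THEN dual_order.strict_implies_not_eq]
    by (simp add: frame_inner_def divide_simps) (simp add: power2_eq_square algebra_simps)
qed simp

lemma barycentric_nagel_on_cevian:
  "collinear {A, foot (excenter A B C) B C,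
     (1 / (a + b + c)) *\<^sub>R ((b + c - a) *\<^sub>R A + (c + a - b) *\<^sub>R B + (a + b - c) *\<^sub>R C)}"
proof -
  define k t where "k = (a + b - c) / (2 * a)" and "t = 2 * a / (a + b + c)"
  have touch: "foot (excenter A B C) B C = frame_point (1 - k) k"
    using frame_point_affine[of 1 0 k 0 1] unfolding foot_excenter k_def
    by (simp add: frame_point_vertices)
  have "(1 / (a + b + c)) *\<^sub>R ((b + c - a) *\<^sub>R A + (c + a - b) *\<^sub>R B + (a + b - c) *\<^sub>R C)
      = frame_point ((c + a - b) / (a + b + c)) ((a + b - c) / (a + b + c))"
    using perimeter_pos by (intro frame_point_barycentric) auto
  also have "\<dots> = frame_point (0 + t * ((1 - k) - 0)) (0 + t * (k - 0))"
    unfolding frame_point_eq_iff k_def t_def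
    using sides_pos(1) perimeter_pos by (simp add: divide_simps)
  also have "\<dots> = A + t *\<^sub>R (foot (excenter A B C) B C - A)"
    unfolding touch frame_point_affine[symmetric] frame_point_vertices ..
  finally show ?thesis
    by (intro affine_hull_3_imp_collinear) (auto simp: affine_hull_2_alt)
qed

lemma nagel_point_eq:
  "nagel_point A B C
     = (1 / (a + b + c)) *\<^sub>R ((b + c - a) *\<^sub>R A + (c + a - b) *\<^sub>R B + (a + b - c) *\<^sub>R C)"
    (is "_ = ?N")
proof -
  interpret B: triangle B C A
    by (rule rotate)
  interpret C: triangle C A B
    by (rule B.rotate)
  define TA TB where "TA = foot (excenter A B C) B C" and "TB = foot (excenter B C A) C A"
  have "b + c + a = a + b + c" "c + a + b = a + b + c"
    by simp_all
  moreover have "X + Y + Z = Z + X + Y" "X + Y + Z = Y + Z + X" for X Y Z :: point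
    by (simp_all only: add.commute add.left_commute)
  ultimately have
    "(1 / (b + c + a)) *\<^sub>R ((c + a - b) *\<^sub>R B + (a + b - c) *\<^sub>R C + (b + c - a) *\<^sub>R A) = ?N"
    "(1 / (c + a + b)) *\<^sub>R ((a + b - c) *\<^sub>R C + (b + c - a) *\<^sub>R A + (c + a - b) *\<^sub>R B) = ?N"
    by metis+
  then have cevians: "collinear {A, TA, ?N}" "collinear {B, TB, ?N}"
    "collinear {C, foot (excenter C A B) A B, ?N}"
    using barycentric_nagel_on_cevian B.barycentric_nagel_on_cevian C.barycentric_nagel_on_cevian
    unfolding TA_def TB_def by metis+
  have TA_line: "TA \<in> affine hull {B, C}" and TB_line: "TB \<in> affine hull {C, A}"
    unfolding TA_def TB_def foot_excenter B.foot_excenter affine_hull_2_alt by blast+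
  have "TA \<noteq> B"
    unfolding TA_def foot_excenter using sides_pos(1) tangent_lengths_pos(3) by simp
  have unique: "M = ?N" if "collinear {A, TA, M}" "collinear {B, TB, M}" for M
  proof (rule lines_meet_once)
    show "A \<noteq> TA"
      using TA_line vertex_not_on_opposite_line by blast
    show "B \<noteq> TB"
      using TB_line B.vertex_not_on_opposite_line by blast
    show "\<not> collinear {A, TA, B}"
      using TA_line \<open>TA \<noteq> B\<close> by (rule cevian_noncollinear)
  qed (fact that cevians)+
  show ?thesis
    unfolding nagel_point_def TA_def[symmetric] TB_def[symmetric]
    by (rule the_equality) (use cevians unique in blast)+
qed

lemma nagel_point_on_altitude:
  "(nagel_point A B C - foot (bevan_point A B C) A (incenter A B C))
     \<bullet> (foot (bevan_point A B C) C (incenter A B C)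
          - foot (bevan_point A B C) B (incenter A B C)) = 0"
proof -
  interpret B: triangle B C A
    by (rule rotate)
  interpret C: triangle C A B
    by (rule B.rotate)
  define p where "p = a + b + c"
  have N: "nagel_point A B C = frame_point ((c + a - b) / p) ((a + b - c) / p)"
    unfolding nagel_point_eq p_def using perimeter_pos by (intro frame_point_barycentric) auto
  have I: "incenter A B C = frame_point (b / p) (c / p)"
    unfolding incenter_frame p_def ..
  have FA: "foot (bevan_point A B C) A (incenter A B C)
      = frame_point (a / (b + c - a) * (b / p)) (a / (b + c - a) * (c / p))"
    unfolding foot_bevan_point unfolding I
    using frame_point_affine[of 0 0 "a / (b + c - a)" "b / p" "c / p"]
    by (simp add: frame_point_vertices)
  have FB: "foot (bevan_point A B C) B (incenter A B C)
      = frame_point (1 + b / (c + a - b) * (b / p - 1)) (b / (c + a - b) * (c / p))"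
    unfolding B.foot_bevan_point[unfolded centers_rotate] unfolding I
    using frame_point_affine[of 1 0 "b / (c + a - b)" "b / p" "c / p"]
    by (simp add: frame_point_vertices)
  have FC: "foot (bevan_point A B C) C (incenter A B C)
      = frame_point (c / (a + b - c) * (b / p)) (1 + c / (a + b - c) * (c / p - 1))"
    unfolding C.foot_bevan_point[unfolded centers_rotate] unfolding I
    using frame_point_affine[of 0 1 "c / (a + b - c)" "b / p" "c / p"]
    by (simp add: frame_point_vertices)
  (* p stays opaque while the denominators are cleared, so that they remain factored *)
  have "p \<noteq> 0" "b + c - a \<noteq> 0" "c + a - b \<noteq> 0" "a + b - c \<noteq> 0"
    using perimeter_pos tangent_lengths_pos unfolding p_def by simp_all
  then show ?thesis
    unfolding N FA FB FC inner_frame_point frame_inner_def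
    by (simp add: divide_simps) (unfold p_def, algebra)
qed

end

theorem proposition4p1:
  fixes A B C :: point
  assumes "\<not> collinear {A, B, C}"
  defines "I \<equiv> incenter A B C"
      and "Be \<equiv> bevan_point A B C"
  defines "A' \<equiv> foot Be A I"
      and "B' \<equiv> foot Be B I"
      and "C' \<equiv> foot Be C I"
  shows "is_orthocenter A' B' C' (nagel_point A B C)"
proof -
  interpret triangle A B C
    using assms(1) by unfold_locales
  interpret B: triangle B C A
    by (rule rotate)
  interpret C: triangle C A B
    by (rule B.rotate)
  have "(nagel_point A B C - A') \<bullet> (C' - B') = 0"
    unfolding A'_def B'_def C'_def Be_def I_def by (rule nagel_point_on_altitude)
  moreover have "(nagel_point A B C - B') \<bullet> (A' - C') = 0"
    using B.nagel_point_on_altitude unfolding centers_rotate A'_def B'_def C'_def Be_def I_def .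
  moreover have "(nagel_point A B C - C') \<bullet> (B' - A') = 0"
    using C.nagel_point_on_altitude unfolding centers_rotate A'_def B'_def C'_def Be_def I_def .
  ultimately show ?thesis
    unfolding is_orthocenter_def by blast
qed

end
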